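(* Let $A=(a_0,\dots,a_{n-1})$ be an array of pairwise distinct numbers, $k_1<k_2$ positive integers, $\Delta=k_2-k_1$. Consider one iteration of Cover-approx$(A,k_1,k_2)$, in which the prefix $(a,c)$ (from the current start $a$ to the found end $c$) and then the suffix $(b,c)$ are found. Let $X=(x_1,\dots,x_{k_2})$ be the lexicographically minimal (with respect to the sequence of positions) increasing subsequence of length $k_2$ of $(a_a,\dots,a_c)$, and $Y=(y_1,\dots,y_{k_1})$ the lexicographically minimal increasing subsequence of length $k_1$ of $(a_b,\dots,a_c)$, where $x_t,y_t$ denote positions. Then $y_i\ge x_{i+\Delta}$ for all $1\le i\le k_1$.
   Context: For $i\le j$, $\mathrm{LIS}(i,j)$ denotes the length of a longest increasing subsequence of $(a_i,\dots,a_j)$. Cover-approx$(A,k_1,k_2)$: set $C=\emptyset$, $i=0$. Repeat: let $j$ be the smallest index $\ge i$ with $\mathrm{LIS}(i,j)\ge k_2$; if none exists, return $C$. Let $q$ be the largest index $\le j$ with $\mathrm{LIS}(q,j)\ge k_1$. Add the segment $(q,j,L)$ to $C$, where $L$ is a longest increasing subsequence of $(a_q,\dots,a_j)$, and set $i=q$. In an iteration, $(i,j)$ is called the computed prefix and $(q,j)$ the computed suffix. *)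

theory Defs
  imports Complex_Main
begin

text \<open>Arrays are functions A :: nat => real, positions 0..n-1.
  An increasing subsequence of (a_i,...,a_j) is given by its list of positions.\<close>

definition inc_subseq :: "(nat \<Rightarrow> real) \<Rightarrow> nat \<Rightarrow> nat \<Rightarrow> nat list \<Rightarrow> bool" where
  "inc_subseq A i j ps \<longleftrightarrow>
     sorted_wrt (<) ps \<and> set ps \<subseteq> {i..j} \<and> sorted_wrt (<) (map A ps)"

definition LIS :: "(nat \<Rightarrow> real) \<Rightarrow> nat \<Rightarrow> nat \<Rightarrow> nat" where
  "LIS A i j = Max {length ps | ps. inc_subseq A i j ps}"

definition lexmin_inc_subseq :: "(nat \<Rightarrow> real) \<Rightarrow> nat \<Rightarrow> nat \<Rightarrow> nat \<Rightarrow> nat list \<Rightarrow> bool" where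
  "lexmin_inc_subseq A i j k ps \<longleftrightarrow>
     inc_subseq A i j ps \<and> length ps = k \<and>
     (\<forall>qs. inc_subseq A i j qs \<and> length qs = k \<longrightarrow>
            ps = qs \<or> (ps, qs) \<in> lexord {(x, y). x < y})"

definition is_least :: "nat set \<Rightarrow> nat \<Rightarrow> bool" where
  "is_least S x \<longleftrightarrow> x \<in> S \<and> (\<forall>y\<in>S. x \<le> y)"

definition is_greatest :: "nat set \<Rightarrow> nat \<Rightarrow> bool" where
  "is_greatest S x \<longleftrightarrow> x \<in> S \<and> (\<forall>y\<in>S. y \<le> x)"

text \<open>Start indices i reached by Cover-approx(A,k1,k2) on an array of length n.\<close>
inductive cover_start :: "(nat \<Rightarrow> real) \<Rightarrow> nat \<Rightarrow> nat \<Rightarrow> nat \<Rightarrow> nat \<Rightarrow> bool"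
  for A n k1 k2 where
  init: "cover_start A n k1 k2 0"
| step: "cover_start A n k1 k2 i \<Longrightarrow>
         is_least {j. i \<le> j \<and> j < n \<and> k2 \<le> LIS A i j} j \<Longrightarrow>
         is_greatest {q. q \<le> j \<and> k1 \<le> LIS A q j} q \<Longrightarrow>
         cover_start A n k1 k2 q"

end

theory Submission
  imports Defs
begin

text \<open>Write \<open>\<Delta> = k2 - k1\<close>. As \<open>b\<close> is the last start of a length-\<open>k1\<close> increasing
  subsequence ending by \<open>c\<close>, no increasing subsequence of \<open>(a(b+1),\<dots>,a(c))\<close> has length \<open>k1\<close>.
  Suppose \<open>x(i+\<Delta>-1) < y(i) < x(i+\<Delta>)\<close>; then the tails can be exchanged. If
  \<open>A(y(i)) < A(x(i+\<Delta>))\<close>, then \<open>y(2),\<dots>,y(i),x(i+\<Delta>),\<dots>,x(k2)\<close> is such a forbidden subsequence;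
  otherwise \<open>x(1),\<dots>,x(i+\<Delta>-1),y(i),\<dots>,y(k1)\<close> is an increasing subsequence of length \<open>k2\<close>
  lexicographically smaller than \<open>X\<close>. Hence \<open>x(i+\<Delta>-1) < y(i)\<close> forces \<open>x(i+\<Delta>) \<le> y(i)\<close>, and
  induction on \<open>i\<close> concludes, starting from \<open>x(\<Delta>) < b\<close> (otherwise \<open>x(\<Delta>+1),\<dots>,x(k2)\<close> would be
  forbidden).\<close>

lemma strict_sorted_nth_mono:
  fixes xs :: "'a::linorder list"
  assumes "sorted_wrt (<) xs" "j \<le> k" "k < length xs"
  shows "xs ! j \<le> xs ! k"
  using assms by (metis le_less sorted_wrt_nth_less)

lemma sorted_wrt_less_in_set_take:
  fixes xs :: "'a::linorder list"
  assumes "sorted_wrt (<) xs" "x \<in> set (take k xs)" "k < length xs"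
  shows "x < xs ! k"
  using assms by (auto simp: in_set_conv_nth sorted_wrt_nth_less)

lemma sorted_wrt_le_in_set_take_Suc:
  fixes xs :: "'a::linorder list"
  assumes "sorted_wrt (<) xs" "x \<in> set (take (Suc k) xs)" "k < length xs"
  shows "x \<le> xs ! k"
  using assms by (auto simp: in_set_conv_nth less_Suc_eq_le intro: strict_sorted_nth_mono)

lemma sorted_wrt_le_in_set_drop:
  fixes xs :: "'a::linorder list"
  assumes "sorted_wrt (<) xs" "y \<in> set (drop k xs)"
  shows "xs ! k \<le> y"
  using assms by (auto simp: in_set_conv_nth intro!: strict_sorted_nth_mono)

lemma sorted_wrt_less_in_set_drop_Suc:
  fixes xs :: "'a::linorder list"
  assumes "sorted_wrt (<) xs" "y \<in> set (drop (Suc k) xs)"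
  shows "xs ! k < y"
  using assms by (auto simp: in_set_conv_nth sorted_wrt_nth_less)

lemma sorted_wrt_hd_le:
  fixes xs :: "'a::linorder list"
  assumes "sorted_wrt (<) xs" "y \<in> set xs"
  shows "hd xs \<le> y"
  using sorted_wrt_le_in_set_drop[of xs y 0] assms by (cases xs) auto

lemma inc_subseq_length_le_LIS:
  assumes "inc_subseq A i j ps"
  shows "length ps \<le> LIS A i j"
proof -
  have "length qs \<le> card {i..j}" if "inc_subseq A i j qs" for qs
  proof -
    from that have "distinct qs" "set qs \<subseteq> {i..j}"
      by (auto simp: inc_subseq_def strict_sorted_iff)
    then show ?thesis by (metis card_mono distinct_card finite_atLeastAtMost)
  qed
  then have "finite {length qs | qs. inc_subseq A i j qs}"
    by (auto intro: finite_subset[of _ "{..card {i..j}}"])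
  then show ?thesis unfolding LIS_def using assms by (auto intro: Max_ge)
qed

lemma inc_subseq_take: "inc_subseq A i j xs \<Longrightarrow> inc_subseq A i j (take m xs)"
  by (auto simp: inc_subseq_def take_map[symmetric] sorted_wrt_take dest: in_set_takeD)

lemma inc_subseq_drop: "inc_subseq A i j xs \<Longrightarrow> inc_subseq A i j (drop m xs)"
  by (auto simp: inc_subseq_def drop_map[symmetric] sorted_wrt_drop dest: in_set_dropD)

lemma inc_subseq_change_range:
  "inc_subseq A i j xs \<Longrightarrow> set xs \<subseteq> {i'..j'} \<Longrightarrow> inc_subseq A i' j' xs"
  by (simp add: inc_subseq_def)

lemma inc_subseq_append:
  assumes xs: "inc_subseq A i j xs" and ys: "inc_subseq A i j ys"
    and below_hd: "\<forall>x\<in>set xs. x < hd ys \<and> A x < A (hd ys)"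
  shows "inc_subseq A i j (xs @ ys)"
proof -
  have "hd ys \<le> y \<and> A (hd ys) \<le> A y" if "y \<in> set ys" for y
  proof -
    from that have "hd (map A ys) = A (hd ys)" by (cases ys) auto
    then show ?thesis
      using ys that sorted_wrt_hd_le[of ys y] sorted_wrt_hd_le[of "map A ys" "A y"]
      by (simp add: inc_subseq_def)
  qed
  then show ?thesis
    using xs ys below_hd by (fastforce simp: inc_subseq_def sorted_wrt_append)
qed

lemma lexmin_inc_subseq_nth_le:
  assumes X: "lexmin_inc_subseq A i j k X"
    and Z: "inc_subseq A i j (take m X @ z # zs)" "length (take m X @ z # zs) = k"
    and m: "m < length X"
  shows "X ! m \<le> z"
proof (rule ccontr)
  let ?less = "lexord {(x, y :: nat). x < y}"
  assume "\<not> X ! m \<le> z"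
  then have "(take m X @ z # zs, take m X @ X ! m # drop (Suc m) X) \<in> ?less"
    by (intro lexord_append_leftI) simp
  then have Z_less: "(take m X @ z # zs, X) \<in> ?less"
    by (metis id_take_nth_drop m)
  have "asym ?less" by (rule lexord_asym) (auto intro: asymI)
  moreover have "X = take m X @ z # zs \<or> (X, take m X @ z # zs) \<in> ?less"
    using X Z by (simp add: lexmin_inc_subseq_def)
  ultimately show False
    using Z_less by (auto dest: asymD)
qed

lemma inc_subseq_after_greatest_start_short:
  assumes b: "is_greatest {q. q \<le> c \<and> k \<le> LIS A q c} b"
    and k: "0 < k" and ps: "inc_subseq A (Suc b) c ps"
  shows "length ps < k"
proof (rule ccontr)
  assume "\<not> length ps < k"
  then have "k \<le> LIS A (Suc b) c" "ps \<noteq> []"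
    using inc_subseq_length_le_LIS[OF ps] k by auto
  moreover have "Suc b \<le> c"
    using ps \<open>ps \<noteq> []\<close> by (auto simp: inc_subseq_def neq_Nil_conv)
  ultimately show False
    using b by (auto simp: is_greatest_def)
qed

locale tail_exchange =
  fixes A :: "nat \<Rightarrow> real" and a b c k d :: nat and X Y :: "nat list"
  assumes inj: "inj_on A {a..c}"
    and X: "lexmin_inc_subseq A a c (k + d) X"
    and Y: "inc_subseq A b c Y" and length_Y: "length Y = k"
    and a_le_b: "a \<le> b"
    and beyond_b_short: "\<And>ps. inc_subseq A (Suc b) c ps \<Longrightarrow> length ps < k"
    and d_pos: "0 < d"
begin

lemma X_inc: "inc_subseq A a c X" and length_X: "length X = k + d"
  using X by (auto simp: lexmin_inc_subseq_def)

lemma X_range: "j < k + d \<Longrightarrow> X ! j \<in> {a..c}"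
  using X_inc length_X by (metis inc_subseq_def nth_mem subsetD)

lemma Y_range: "j < k \<Longrightarrow> Y ! j \<in> {b..c}"
  using Y length_Y by (metis inc_subseq_def nth_mem subsetD)

lemma X_before_d_less_b: "X ! (d - 1) < b"
proof (rule ccontr)
  assume "\<not> X ! (d - 1) < b"
  then have "set (drop d X) \<subseteq> {Suc b..c}"
    using X_inc d_pos sorted_wrt_less_in_set_drop_Suc[of X _ "d - 1"]
    by (fastforce simp: inc_subseq_def dest: in_set_dropD)
  then have "inc_subseq A (Suc b) c (drop d X)"
    by (intro inc_subseq_change_range[OF inc_subseq_drop[OF X_inc]])
  then show False
    using beyond_b_short length_X by fastforce
qed

lemma no_exchange_below:
  assumes i: "i < k" and pos: "Y ! i < X ! (i + d)" and val: "A (Y ! i) < A (X ! (i + d))"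
  shows False
proof -
  let ?head = "take i (drop 1 Y)" and ?tail = "drop (i + d) X"
  have b_le: "b \<le> Y ! 0" using Y_range i by simp
  have head: "inc_subseq A (Suc b) c ?head"
  proof (rule inc_subseq_change_range[OF inc_subseq_take[OF inc_subseq_drop[OF Y]]])
    show "set ?head \<subseteq> {Suc b..c}"
      using Y b_le sorted_wrt_less_in_set_drop_Suc[of Y _ 0]
      by (fastforce simp: inc_subseq_def dest: in_set_takeD in_set_dropD)
  qed
  have tail: "inc_subseq A (Suc b) c ?tail"
  proof (rule inc_subseq_change_range[OF inc_subseq_drop[OF X_inc]])
    have "Y ! 0 \<le> Y ! i"
      using Y i length_Y strict_sorted_nth_mono[of Y 0 i] by (simp add: inc_subseq_def)
    then show "set ?tail \<subseteq> {Suc b..c}"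
      using X_inc b_le pos sorted_wrt_le_in_set_drop[of X _ "i + d"]
      by (fastforce simp: inc_subseq_def dest: in_set_dropD)
  qed
  have "x < X ! (i + d) \<and> A x < A (X ! (i + d))" if x: "x \<in> set ?head" for x
  proof -
    have "x \<in> set (take (Suc i) Y)"
      using x by (metis take_drop add.commute plus_1_eq_Suc in_set_dropD)
    then have "x \<le> Y ! i \<and> A x \<le> A (Y ! i)"
      using Y i length_Y sorted_wrt_le_in_set_take_Suc[of Y x i]
        sorted_wrt_le_in_set_take_Suc[of "map A Y" "A x" i]
      by (auto simp: inc_subseq_def take_map)
    then show ?thesis using pos val by auto
  qed
  then have "inc_subseq A (Suc b) c (?head @ ?tail)"
    using i length_X by (intro inc_subseq_append[OF head tail]) (simp add: hd_drop_conv_nth)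
  then show False
    using beyond_b_short i length_X length_Y by fastforce
qed

lemma no_exchange_above:
  assumes i: "i < k" and before: "X ! (i + d - 1) < Y ! i"
    and pos: "Y ! i < X ! (i + d)" and val: "A (X ! (i + d)) < A (Y ! i)"
  shows False
proof -
  let ?head = "take (i + d) X" and ?tail = "drop i Y"
  have "x < Y ! i \<and> A x < A (Y ! i)" if x: "x \<in> set ?head" for x
  proof -
    have "x \<le> X ! (i + d - 1)"
      using X_inc x i d_pos length_X sorted_wrt_le_in_set_take_Suc[of X x "i + d - 1"]
      by (simp add: inc_subseq_def)
    moreover have "A x < A (X ! (i + d))"
      using X_inc x i length_X sorted_wrt_less_in_set_take[of "map A X" "A x" "i + d"]
      by (simp add: inc_subseq_def take_map)
    ultimately show ?thesis using before val by auto
  qed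
  moreover have "inc_subseq A a c ?tail"
    using Y a_le_b
    by (intro inc_subseq_change_range[OF inc_subseq_drop[OF Y]])
      (auto simp: inc_subseq_def dest: in_set_dropD)
  moreover have "hd ?tail = Y ! i"
    using i length_Y by (simp add: hd_drop_conv_nth)
  ultimately have "inc_subseq A a c (?head @ ?tail)"
    by (intro inc_subseq_append[OF inc_subseq_take[OF X_inc]]) simp_all
  moreover have "?tail = Y ! i # drop (Suc i) Y"
    using i length_Y by (simp add: Cons_nth_drop_Suc)
  ultimately have "X ! (i + d) \<le> Y ! i"
    using i length_X length_Y
    by (intro lexmin_inc_subseq_nth_le[OF X, of "i + d" "Y ! i" "drop (Suc i) Y"]) auto
  then show False using pos by simp
qed

lemma exchange_step:
  assumes i: "i < k" and before: "X ! (i + d - 1) < Y ! i"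
  shows "X ! (i + d) \<le> Y ! i"
proof (rule ccontr)
  assume "\<not> X ! (i + d) \<le> Y ! i"
  then have pos: "Y ! i < X ! (i + d)" by simp
  have "Y ! i \<in> {a..c}" "X ! (i + d) \<in> {a..c}"
    using X_range[of "i + d"] Y_range[of i] a_le_b i by auto
  then have "A (Y ! i) \<noteq> A (X ! (i + d))"
    using pos inj by (metis inj_onD less_irrefl)
  then consider "A (Y ! i) < A (X ! (i + d))" | "A (X ! (i + d)) < A (Y ! i)"
    by linarith
  then show False
    using no_exchange_below[OF i pos] no_exchange_above[OF i before pos] by cases
qed

lemma X_shifted_le_Y: "i < k \<Longrightarrow> X ! (i + d) \<le> Y ! i"
proof (induction i)
  case 0
  then show ?case
    using exchange_step[of 0] X_before_d_less_b Y_range[of 0] by force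
next
  case (Suc i)
  have "Y ! i < Y ! Suc i"
    using Y Suc.prems length_Y by (simp add: inc_subseq_def sorted_wrt_nth_less)
  then show ?case
    using exchange_step[of "Suc i"] Suc by simp
qed

end

theorem lemma3:
  fixes A :: "nat \<Rightarrow> real" and n k1 k2 a b c :: nat and X Y :: "nat list"
  assumes distinct: "inj_on A {..<n}"
    and k1_pos: "0 < k1" and k12: "k1 < k2"
    and start: "cover_start A n k1 k2 a"
    and prefix: "is_least {j. a \<le> j \<and> j < n \<and> k2 \<le> LIS A a j} c"
    and suffix: "is_greatest {q. q \<le> c \<and> k1 \<le> LIS A q c} b"
    and X: "lexmin_inc_subseq A a c k2 X"
    and Y: "lexmin_inc_subseq A b c k1 Y"
  shows "\<forall>i < k1. X ! (i + (k2 - k1)) \<le> Y ! i"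
proof -
  have c: "a \<le> c" "c < n" using prefix by (auto simp: is_least_def)
  have "k1 \<le> LIS A a c"
    using X k12 inc_subseq_length_le_LIS[of A a c X] by (simp add: lexmin_inc_subseq_def)
  then have "a \<le> b" using suffix c by (auto simp: is_greatest_def)
  moreover have "inj_on A {a..c}" using distinct c by (auto intro: inj_on_subset)
  ultimately interpret tail_exchange A a b c k1 "k2 - k1" X Y
    using X Y k12 inc_subseq_after_greatest_start_short[OF suffix k1_pos]
    by unfold_locales (auto simp: lexmin_inc_subseq_def)
  show ?thesis using X_shifted_le_Y by blast
qed

end
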